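(* Let $(G,b,x,k)$ be an instance of Collapsed $k$-Core and let $G'$ be the graph obtained from $G$ by adding a new vertex $u$ adjacent to all vertices of $G$. Then $(G,b,x,k)$ is a yes-instance if and only if $(G',b+1,x,k)$ is a yes-instance.
   Context: For an integer $k$, the $k$-core of a graph $G$ is the (uniquely determined) largest induced subgraph of $G$ in which every vertex has degree at least $k$ (possibly empty); its size is its number of vertices. Collapsed $k$-Core: given an undirected graph $G=(V,E)$ and integers $b$, $x$, $k$, decide whether there is a set $S\subseteq V$ with $|S|\le b$ such that the $k$-core of $G-S$ has at most $x$ vertices. *)

theory Defs
  imports Main
begin

definition simple_graph :: "'a set \<Rightarrow> ('a \<Rightarrow> 'a \<Rightarrow> bool) \<Rightarrow> bool" where
  "simple_graph V E \<longleftrightarrow> finite V \<and> (\<forall>v w. E v w \<longrightarrow> E w v)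
     \<and> (\<forall>v. \<not> E v v) \<and> (\<forall>v w. E v w \<longrightarrow> v \<in> V \<and> w \<in> V)"

definition min_deg_ge :: "('a \<Rightarrow> 'a \<Rightarrow> bool) \<Rightarrow> nat \<Rightarrow> 'a set \<Rightarrow> bool" where
  "min_deg_ge E k C \<longleftrightarrow> (\<forall>v\<in>C. k \<le> card {w \<in> C. E v w})"

text \<open>Size of the k-core of the graph induced on V: the number of vertices of the
  largest induced subgraph of minimum degree at least k (the empty set qualifies).\<close>
definition kcore_size :: "'a set \<Rightarrow> ('a \<Rightarrow> 'a \<Rightarrow> bool) \<Rightarrow> nat \<Rightarrow> nat" where
  "kcore_size V E k = Max (card ` {C. C \<subseteq> V \<and> min_deg_ge E k C})"

definition collapsed_kcore :: "'a set \<Rightarrow> ('a \<Rightarrow> 'a \<Rightarrow> bool) \<Rightarrow> nat \<Rightarrow> nat \<Rightarrow> nat \<Rightarrow> bool" where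
  "collapsed_kcore V E b x k \<longleftrightarrow>
     (\<exists>S. S \<subseteq> V \<and> card S \<le> b \<and> kcore_size (V - S) E k \<le> x)"

definition add_universal :: "'a \<Rightarrow> 'a set \<Rightarrow> ('a \<Rightarrow> 'a \<Rightarrow> bool) \<Rightarrow> ('a \<Rightarrow> 'a \<Rightarrow> bool)" where
  "add_universal u V E = (\<lambda>v w. E v w \<or> (v = u \<and> w \<in> V) \<or> (w = u \<and> v \<in> V))"

end

theory Submission
  imports Defs
begin

text \<open>Away from u, the graph G' induces exactly the subgraphs of G, so a solution S of
  G gives the solution S + u of G'. Conversely, a solution S' of G' either contains u, and
  then S' - u solves G, or it does not; then S' - v solves G for any v \<in> S': every k-core
  C of G - (S' - v) can trade v for the universal vertex u, and C - v + u is again a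
  subgraph of minimum degree at least k in G' - S', because C has more than k vertices and
  every vertex of C loses at most the neighbour v while gaining the neighbour u.\<close>

lemma kcore_size_le_iff:
  assumes "finite V"
  shows "kcore_size V E k \<le> x \<longleftrightarrow> (\<forall>C. C \<subseteq> V \<and> min_deg_ge E k C \<longrightarrow> card C \<le> x)"
proof -
  let ?A = "card ` {C. C \<subseteq> V \<and> min_deg_ge E k C}"
  have "finite ?A"
    using assms by (intro finite_imageI) (auto intro: finite_subset[of _ "Pow V"])
  moreover have "?A \<noteq> {}"
    by (auto simp: min_deg_ge_def intro!: image_eqI[of _ _ "{}"])
  ultimately show ?thesis
    unfolding kcore_size_def using Max_le_iff by auto
qed

lemma card_le_kcore_size:
  assumes "finite V" "C \<subseteq> V" "min_deg_ge E k C"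
  shows "card C \<le> kcore_size V E k"
  using kcore_size_le_iff[OF assms(1)] assms(2,3) by blast

lemma kcore_size_add_universal:
  assumes "u \<notin> V" "W \<subseteq> V"
  shows "kcore_size W (add_universal u V E) k = kcore_size W E k"
proof -
  have "min_deg_ge (add_universal u V E) k C \<longleftrightarrow> min_deg_ge E k C" if "C \<subseteq> W" for C
  proof -
    have "{w \<in> C. add_universal u V E v w} = {w \<in> C. E v w}" if "v \<in> C" for v
      using assms \<open>C \<subseteq> W\<close> that by (auto simp: add_universal_def)
    then show ?thesis by (simp add: min_deg_ge_def)
  qed
  then show ?thesis
    unfolding kcore_size_def by (metis (lifting) mem_Collect_eq)
qed

lemma min_deg_ge_less_card:
  assumes "finite C" "\<And>v. \<not> E v v" "C \<noteq> {}" "min_deg_ge E k C"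
  shows "k < card C"
proof -
  obtain w where w: "w \<in> C" using assms(3) by blast
  have "k \<le> card {w' \<in> C. E w w'}" using assms(4) w by (auto simp: min_deg_ge_def)
  also have "\<dots> \<le> card (C - {w})" using assms(1,2) by (intro card_mono) auto
  also have "\<dots> < card C" using assms(1) w by (rule card_Diff1_less)
  finally show ?thesis .
qed

lemma card_le_card_insert_Diff:
  assumes "finite A" "u \<notin> A"
  shows "card A \<le> card (insert u (A - {v}))"
  using assms by (cases "v \<in> A") (auto simp: card_Diff_singleton)

lemma min_deg_ge_exchange_universal:
  assumes G: "simple_graph V E" and u: "u \<notin> V"
    and C: "C \<subseteq> V" "C \<noteq> {}" "min_deg_ge E k C"
  shows "min_deg_ge (add_universal u V E) k (insert u (C - {v}))"
  unfolding min_deg_ge_def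
proof
  let ?E = "add_universal u V E" and ?C = "insert u (C - {v})"
  have fin: "finite C" using G C(1) by (auto simp: simple_graph_def intro: finite_subset)
  have uC: "u \<notin> C" using u C(1) by blast
  fix y assume y: "y \<in> ?C"
  show "k \<le> card {w \<in> ?C. ?E y w}"
  proof (cases "y = u")
    case True
    have "k \<le> card (C - {v})"
      using min_deg_ge_less_card[OF fin _ C(2,3)] G fin by (cases "v \<in> C") (auto simp: simple_graph_def)
    also have "\<dots> \<le> card {w \<in> ?C. ?E y w}"
      using True C(1) fin by (intro card_mono) (auto simp: add_universal_def)
    finally show ?thesis .
  next
    case False
    then have "y \<in> C" using y by blast
    let ?N = "{w \<in> C. E y w}"
    have "k \<le> card ?N" using C(3) \<open>y \<in> C\<close> by (auto simp: min_deg_ge_def)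
    also have "\<dots> \<le> card (insert u (?N - {v}))"
      using fin uC by (intro card_le_card_insert_Diff) auto
    also have "\<dots> \<le> card {w \<in> ?C. ?E y w}"
      using \<open>y \<in> C\<close> C(1) fin by (intro card_mono) (auto simp: add_universal_def)
    finally show ?thesis .
  qed
qed

lemma kcore_size_restore_le_add_universal:
  assumes G: "simple_graph V E" and u: "u \<notin> V" and S: "S \<subseteq> V"
  shows "kcore_size (V - (S - {v})) E k \<le> kcore_size (insert u V - S) (add_universal u V E) k"
proof -
  have finV: "finite V" using G by (simp add: simple_graph_def)
  show ?thesis
    unfolding kcore_size_le_iff[OF finite_Diff[OF finV]]
  proof (intro allI impI)
    fix C assume C: "C \<subseteq> V - (S - {v}) \<and> min_deg_ge E k C"
    show "card C \<le> kcore_size (insert u V - S) (add_universal u V E) k"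
    proof (cases "C = {}")
      case False
      have "card C \<le> card (insert u (C - {v}))"
        using C u finV by (intro card_le_card_insert_Diff) (auto intro: finite_subset)
      also have "\<dots> \<le> kcore_size (insert u V - S) (add_universal u V E) k"
        using C u S finV False
        by (intro card_le_kcore_size min_deg_ge_exchange_universal[OF G u]) auto
      finally show ?thesis .
    qed simp
  qed
qed

lemma collapsed_kcore_add_universal:
  assumes "u \<notin> V" "finite V" "collapsed_kcore V E b x k"
  shows "collapsed_kcore (insert u V) (add_universal u V E) (b + 1) x k"
proof -
  obtain S where S: "S \<subseteq> V" "card S \<le> b" "kcore_size (V - S) E k \<le> x"
    using assms(3) by (auto simp: collapsed_kcore_def)
  have "insert u V - insert u S = V - S" using assms(1) by auto
  moreover have "card (insert u S) \<le> b + 1"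
    using S(1,2) assms(2) by (simp add: card_insert_if finite_subset)
  ultimately show ?thesis
    unfolding collapsed_kcore_def using S kcore_size_add_universal[OF assms(1) Diff_subset, of S E k]
    by (intro exI[of _ "insert u S"]) auto
qed

lemma collapsed_kcore_of_add_universal:
  assumes G: "simple_graph V E" and u: "u \<notin> V"
    and "collapsed_kcore (insert u V) (add_universal u V E) (b + 1) x k"
  shows "collapsed_kcore V E b x k"
proof -
  obtain S' where S': "S' \<subseteq> insert u V" "card S' \<le> b + 1"
      "kcore_size (insert u V - S') (add_universal u V E) k \<le> x"
    using assms(3) by (auto simp: collapsed_kcore_def)
  have "finite S'" using S'(1) G by (auto simp: simple_graph_def intro: finite_subset)
  obtain v where v: "card (S' - {v}) \<le> b" and v_u: "u \<in> S' \<Longrightarrow> v = u"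
  proof (cases "S' = {}")
    case False
    then obtain w where "w \<in> S'" "u \<in> S' \<Longrightarrow> w = u" by blast
    then show ?thesis using S'(2) \<open>finite S'\<close> by (intro that[of w]) auto
  qed (use that in simp)
  let ?S = "S' - {v}"
  have "kcore_size (V - ?S) E k \<le> x"
  proof (cases "u \<in> S'")
    case True
    then have "V - ?S = insert u V - S'" using v_u u by auto
    then show ?thesis using S'(3) kcore_size_add_universal[OF u Diff_subset, of ?S E k] by simp
  next
    case False
    then have "S' \<subseteq> V" using S'(1) by blast
    then show ?thesis
      using S'(3) kcore_size_restore_le_add_universal[OF G u, of S' v k] by linarith
  qed
  then show ?thesis
    unfolding collapsed_kcore_def using S'(1) v v_u by (intro exI[of _ ?S]) auto
qed

theorem mainTheorem9:
  fixes V :: "'a set" and E :: "'a \<Rightarrow> 'a \<Rightarrow> bool" and u :: 'a and b x k :: nat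
  assumes "simple_graph V E" and "u \<notin> V"
  shows "collapsed_kcore V E b x k \<longleftrightarrow>
         collapsed_kcore (insert u V) (add_universal u V E) (b + 1) x k"
  using assms collapsed_kcore_add_universal collapsed_kcore_of_add_universal
  by (metis simple_graph_def)

end
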